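(* Fix $k\ge2$ and let $\mathbf{P}:(\mathbb{Z}/2\mathbb{Z})^k\to\mathbb{R}[x]$. Define $\mathbf{Q}:(\mathbb{Z}/2\mathbb{Z})^{k-1}\to\mathbb{R}[x]$ by $Q_{1\alpha}=P_{01\alpha}+P_{10\alpha}$ and $Q_{0\alpha}=P_{00\alpha}+xP_{11\alpha}$ for all $\alpha\in(\mathbb{Z}/2\mathbb{Z})^{k-2}$. Assume: - there is $\beta\in(\mathbb{Z}/2\mathbb{Z})^{k-2}$ with $P_{00\beta}\not\equiv0$ or $P_{11\beta}\not\equiv0$; - there is $\gamma\in(\mathbb{Z}/2\mathbb{Z})^{k-2}$ with $P_{01\gamma}\not\equiv0$ or $P_{10\gamma}\not\equiv0$. If $\mathbf{P}$ is an interpolatory $k$-cube, then $\mathbf{Q}$ is an interpolatory $(k-1)$-cube.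
   Context: Elements of $(\mathbb{Z}/2\mathbb{Z})^k$ are strings $\alpha=\alpha_1\cdots\alpha_k$, and $\eta(i)$ has a single $1$ in coordinate $i$. Interpolation operators. For $\lambda,\rho\ge0$, ${}_1\mathrm{I}^\rho_\lambda$ maps $\mathbf{P}:(\mathbb{Z}/2\mathbb{Z})^k\to\mathbb{R}[x]$ to $\mathbf{Q}:(\mathbb{Z}/2\mathbb{Z})^{k-1}\to\mathbb{R}[x]$ with $Q_\alpha=\lambda P_{1\alpha}+\rho P_{0\alpha}$. For $k$-tuples $\lambda,\rho$ of nonnegative reals, $\mathbb{I}^\rho_\lambda={}_1\mathrm{I}^{\rho_k}_{\lambda_k}\cdots{}_1\mathrm{I}^{\rho_1}_{\lambda_1}$, which yields a single polynomial. Flip operators. $(\Phi_i\mathbf{P})_\alpha=xP_{\alpha+\eta(i)}$ if $\alpha_i=0$, and $=P_{\alpha+\eta(i)}$ if $\alpha_i=1$. $\Phi_S=\prod_{i\in S}\Phi_i$. Interpolatory $k$-cubes. $\mathbf{P}$ is an interpolatory $k$-cube if, for all $k$-tuples $\lambda,\rho$ of positive reals and all $S\subseteq\{1,\ldots,k\}$, $\mathbb{I}^\rho_\lambda\Phi_S\mathbf{P}$ is standard (i.e. $\equiv0$ or has positive leading coefficient) and has only nonpositive zeros (i.e. is $\equiv0$ or has all zeros real and $\le0$). *)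

theory Defs
  imports "HOL-Computational_Algebra.Polynomial" Complex_Main
begin

text \<open>Elements of (Z/2Z)^k are bool lists of length k (True = 1, first list
entry = coordinate 1). A map (Z/2Z)^k -> R[x] is a function on bool lists;
only its values on lists of length k matter.\<close>

type_synonym cube = "bool list \<Rightarrow> real poly"

definition interp1 :: "real \<Rightarrow> real \<Rightarrow> cube \<Rightarrow> cube" where
  "interp1 lam rho P = (\<lambda>\<alpha>. smult lam (P (True # \<alpha>)) + smult rho (P (False # \<alpha>)))"

text \<open>Iterated interpolation I_k ... I_1 (I_1 applied first), yielding P [].\<close>
fun interp :: "real list \<Rightarrow> real list \<Rightarrow> cube \<Rightarrow> real poly" where
  "interp (l # ls) (r # rs) P = interp ls rs (interp1 l r P)"
| "interp _ _ P = P []"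

text \<open>Flip operator Phi_i (0-based index i, i.e. coordinate i+1).\<close>
definition flip :: "nat \<Rightarrow> cube \<Rightarrow> cube" where
  "flip i P = (\<lambda>\<alpha>. if \<alpha> ! i then P (\<alpha>[i := False])
                   else [:0, 1:] * P (\<alpha>[i := True]))"

definition flipS :: "nat set \<Rightarrow> cube \<Rightarrow> cube" where
  "flipS S P = fold flip (sorted_list_of_set S) P"

definition standard :: "real poly \<Rightarrow> bool" where
  "standard p \<longleftrightarrow> p = 0 \<or> lead_coeff p > 0"

definition nonpos_zeros :: "real poly \<Rightarrow> bool" where
  "nonpos_zeros p \<longleftrightarrow> p = 0 \<or>
     (\<forall>z::complex. poly (map_poly of_real p) z = 0 \<longrightarrow> z \<in> \<real> \<and> Re z \<le> 0)"

definition interpolatory_cube :: "nat \<Rightarrow> cube \<Rightarrow> bool" where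
  "interpolatory_cube k P \<longleftrightarrow>
     (\<forall>lam rho S. length lam = k \<and> length rho = k \<and> (\<forall>a\<in>set lam. a > 0)
        \<and> (\<forall>a\<in>set rho. a > 0) \<and> S \<subseteq> {0..<k} \<longrightarrow>
        standard (interp lam rho (flipS S P)) \<and> nonpos_zeros (interp lam rho (flipS S P)))"

text \<open>The cube Q built from P (values on lists of length < 1 are irrelevant).\<close>
fun contractQ :: "cube \<Rightarrow> cube" where
  "contractQ P (True # \<alpha>) = P (False # True # \<alpha>) + P (True # False # \<alpha>)"
| "contractQ P (False # \<alpha>) = P (False # False # \<alpha>) + [:0, 1:] * P (True # True # \<alpha>)"
| "contractQ P [] = 0"

end

theory Submission
  imports Defs "HOL-Complex_Analysis.Complex_Analysis" "HOL-Computational_Algebra.Fundamental_Theorem_Algebra"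
begin

text \<open>Interpolating and flipping all coordinates but the first two reduces the claim to a
  2-face with corners \<open>a, b, c, d\<close> (the polynomials at \<open>00, 01, 10, 11\<close>), whose contraction has
  corners \<open>a + x d\<close> and \<open>b + c\<close>. Letting one interpolation weight tend to \<open>0\<close> (Hurwitz's
  theorem) shows that the corners and the pencils \<open>a + t b\<close>, \<open>a + t x b\<close>, \<open>a + t c\<close>, ... have only
  nonpositive zeros. For two such polynomials \<open>f, g\<close> the two pencil conditions force their roots
  to interlace, which yields \<open>Im (f z * cnj (g z)) \<ge> 0\<close> and \<open>Im (z g z * cnj (f z)) \<ge> 0\<close> on the
  upper half-plane: the argument of \<open>f z * cnj (g z)\<close> is a difference of sums of angles of root
  factors, which pair off. These cross-term inequalities add up, and by the open mapping theorem
  a positive combination of two polynomials with only nonpositive zeros and a nonnegative cross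
  term again has only nonpositive zeros.\<close>

section \<open>Faces, flips and interpolation\<close>

definition face :: "cube \<Rightarrow> bool \<Rightarrow> cube" where
  "face C b = (\<lambda>\<alpha>. C (b # \<alpha>))"

lemma interp_linear:
  "interp ls rs (\<lambda>\<alpha>. p * A \<alpha> + q * B \<alpha>) = p * interp ls rs A + q * interp ls rs B"
proof (induction ls rs "\<lambda>\<alpha>. p * A \<alpha> + q * B \<alpha>" arbitrary: A B rule: interp.induct)
  case (1 l ls r rs)
  have "interp1 l r (\<lambda>\<alpha>. p * A \<alpha> + q * B \<alpha>) = (\<lambda>\<alpha>. p * interp1 l r A \<alpha> + q * interp1 l r B \<alpha>)"
    by (auto simp: interp1_def algebra_simps fun_eq_iff smult_add_right mult_smult_right)
  then show ?case using 1 by simp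
qed auto

lemma interp_add: "interp ls rs (\<lambda>\<alpha>. A \<alpha> + B \<alpha>) = interp ls rs A + interp ls rs B"
  using interp_linear[of ls rs 1 A 1 B] by simp

lemma interp_mult: "interp ls rs (\<lambda>\<alpha>. p * A \<alpha>) = p * interp ls rs A"
  using interp_linear[of ls rs p A 0 A] by simp

lemma interp_Cons:
  "interp (l # ls) (r # rs) C =
     smult l (interp ls rs (face C True)) + smult r (interp ls rs (face C False))"
  using interp_linear[of ls rs "[:l:]" "face C True" "[:r:]" "face C False"]
  by (simp add: interp1_def face_def)

lemma flip_commute: "flip i (flip j C) = flip j (flip i C)"
  by (cases "i = j") (auto simp: flip_def fun_eq_iff list_update_swap algebra_simps)

lemma fold_flip_commute: "fold flip xs (flip i C) = flip i (fold flip xs C)"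
  by (induction xs arbitrary: C) (simp_all, metis flip_commute)

lemma fold_flip_insort: "fold flip (insort i xs) C = flip i (fold flip xs C)"
  by (induction xs arbitrary: C) (simp_all add: fold_flip_commute, metis flip_commute)

lemma flipS_empty [simp]: "flipS {} C = C"
  by (simp add: flipS_def)

lemma flipS_insert:
  "finite S \<Longrightarrow> i \<notin> S \<Longrightarrow> flipS (insert i S) C = flip i (flipS S C)"
  by (simp add: flipS_def fold_flip_insort)

lemma flipS_linear:
  assumes "finite S"
  shows "flipS S (\<lambda>\<alpha>. p * A \<alpha> + q * B \<alpha>) = (\<lambda>\<alpha>. p * flipS S A \<alpha> + q * flipS S B \<alpha>)"
proof -
  have flip_linear: "flip i (\<lambda>\<alpha>. p * A \<alpha> + q * B \<alpha>) = (\<lambda>\<alpha>. p * flip i A \<alpha> + q * flip i B \<alpha>)"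
    for i and A B :: cube
    by (auto simp: flip_def fun_eq_iff algebra_simps)
  from assms show ?thesis
    by (induction S rule: finite_induct) (auto simp: flipS_insert flip_linear)
qed

lemma flipS_add: "finite S \<Longrightarrow> flipS S (\<lambda>\<alpha>. A \<alpha> + B \<alpha>) = (\<lambda>\<alpha>. flipS S A \<alpha> + flipS S B \<alpha>)"
  using flipS_linear[of S 1 A 1 B] by simp

lemma flipS_mult: "finite S \<Longrightarrow> flipS S (\<lambda>\<alpha>. p * A \<alpha>) = (\<lambda>\<alpha>. p * flipS S A \<alpha>)"
  using flipS_linear[of S p A 0 A] by simp

lemma face_flip_Suc: "face (flip (Suc i) C) b = flip i (face C b)"
  by (auto simp: face_def flip_def fun_eq_iff)

lemma face_flipS_Suc:
  "finite S \<Longrightarrow> face (flipS (Suc ` S) C) b = flipS S (face C b)"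
proof (induction S rule: finite_induct)
  case (insert i S)
  then have "flipS (Suc ` insert i S) C = flip (Suc i) (flipS (Suc ` S) C)"
    by (auto intro: flipS_insert)
  with insert show ?case by (simp add: face_flip_Suc flipS_insert)
qed simp

text \<open>One interpolation step in the first coordinate, preceded by the flip \<open>\<Phi>\<^sub>1\<close> if \<open>flipped\<close>;
  \<open>p0\<close> and \<open>p1\<close> are the results for the faces \<open>0\<alpha>\<close> and \<open>1\<alpha>\<close>.\<close>

definition interp_pair :: "bool \<Rightarrow> real \<Rightarrow> real \<Rightarrow> real poly \<Rightarrow> real poly \<Rightarrow> real poly" where
  "interp_pair flipped l r p0 p1 =
     (if flipped then smult l p0 + smult r ([:0, 1:] * p1) else smult l p1 + smult r p0)"

lemma interp_flipS_Cons:
  assumes "finite S"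
  shows "interp (l # ls) (r # rs) (flipS S C) =
    interp_pair (0 \<in> S) l r (interp ls rs (flipS (Suc -` S) (face C False)))
                            (interp ls rs (flipS (Suc -` S) (face C True)))"
proof -
  have fin: "finite (Suc -` S)"
    using assms by (simp add: finite_vimageI)
  have Suc_image: "Suc ` (Suc -` S) = S - {0}"
    using not0_implies_Suc by fastforce
  show ?thesis
  proof (cases "0 \<in> S")
    case True
    then have "flipS S C = flip 0 (flipS (S - {0}) C)"
      using flipS_insert[of "S - {0}" 0 C] assms by (simp add: insert_absorb)
    then have "flipS S C = flip 0 (flipS (Suc ` (Suc -` S)) C)"
      by (simp only: Suc_image)
    moreover have "face (flip 0 C') True = face C' False"
      and "face (flip 0 C') False = (\<lambda>\<alpha>. [:0, 1:] * face C' True \<alpha>)" for C'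
      by (auto simp: face_def flip_def fun_eq_iff)
    ultimately show ?thesis
      using True fin
      by (simp only: interp_Cons interp_mult face_flipS_Suc interp_pair_def) simp
  next
    case False
    then have "flipS S C = flipS (Suc ` (Suc -` S)) C"
      by (simp only: Suc_image) simp
    then show ?thesis
      using False fin by (simp only: interp_Cons face_flipS_Suc interp_pair_def) simp
  qed
qed

section \<open>Polynomials with only nonpositive zeros\<close>

definition cpoly :: "real poly \<Rightarrow> complex \<Rightarrow> complex" where
  "cpoly p = poly (map_poly of_real p)"

definition nonpos_rooted :: "real poly \<Rightarrow> bool" where
  "nonpos_rooted p \<longleftrightarrow> standard p \<and> nonpos_zeros p"

lemma map_poly_of_real_add:
  "map_poly complex_of_real (p + q) = map_poly of_real p + map_poly of_real q"
  by (rule poly_eqI) (simp add: coeff_map_poly)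

lemma map_poly_of_real_eq_0_iff: "map_poly complex_of_real p = 0 \<longleftrightarrow> p = 0"
  by (rule map_poly_eq_0_iff) auto

lemma cpoly_0 [simp]: "cpoly 0 z = 0"
  by (simp add: cpoly_def)

lemma cpoly_add [simp]: "cpoly (p + q) z = cpoly p z + cpoly q z"
  by (simp add: cpoly_def map_poly_of_real_add)

lemma cpoly_smult [simp]: "cpoly (smult c p) z = of_real c * cpoly p z"
  by (simp add: cpoly_def map_poly_smult)

lemma cpoly_pCons_0 [simp]: "cpoly (pCons 0 p) z = z * cpoly p z"
  by (simp add: cpoly_def map_poly_pCons)

lemma cpoly_of_real: "cpoly p (of_real x) = of_real (poly p x)"
  unfolding cpoly_def by (induction p) (auto simp: map_poly_pCons)

lemma cnj_cpoly: "cnj (cpoly p z) = cpoly p (cnj z)"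
  unfolding cpoly_def by (rule poly_cnj_real) (simp add: coeff_map_poly)

lemma holomorphic_on_cpoly [holomorphic_intros]: "cpoly p holomorphic_on A"
  unfolding cpoly_def by (intro holomorphic_intros)

lemma nonpos_zeros_iff_cpoly:
  "nonpos_zeros p \<longleftrightarrow> p = 0 \<or> (\<forall>z. cpoly p z = 0 \<longrightarrow> z \<in> \<real> \<and> Re z \<le> 0)"
  by (simp add: nonpos_zeros_def cpoly_def)

lemma cpoly_diff [simp]: "cpoly (p - q) z = cpoly p z - cpoly q z"
  using cpoly_add[of "p - q" q z] by simp

lemma finite_cpoly_roots: "p \<noteq> 0 \<Longrightarrow> finite {z. cpoly p z = 0}"
  unfolding cpoly_def by (rule poly_roots_finite) (simp add: map_poly_of_real_eq_0_iff)

lemma cpoly_eq_on_open_imp_eq: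
  assumes "open S" "z \<in> S" "\<And>w. w \<in> S \<Longrightarrow> cpoly p w = cpoly q w"
  shows "p = q"
proof (rule ccontr)
  assume "p \<noteq> q"
  moreover have "S \<subseteq> {w. cpoly (p - q) w = 0}"
    using assms(3) by auto
  ultimately have "finite S"
    using finite_cpoly_roots[of "p - q"] finite_subset by auto
  then show False
    using assms(1,2) finite_imp_not_open by blast
qed

lemma standard_add:
  assumes "standard p" "standard q"
  shows "standard (p + q)"
proof (cases "p = 0 \<or> q = 0")
  case False
  then have lp: "lead_coeff p > 0" and lq: "lead_coeff q > 0"
    using assms by (auto simp: standard_def)
  consider "degree p < degree q" | "degree q < degree p" | "degree p = degree q"
    by linarith
  then show ?thesis
  proof cases
    case 1
    then show ?thesis
      using lq lead_coeff_add_le[OF 1] by (simp add: standard_def)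
  next
    case 2
    then show ?thesis
      using lp lead_coeff_add_le[OF 2] by (simp add: standard_def add.commute)
  next
    case 3
    then have coeff: "coeff (p + q) (degree p) = lead_coeff p + lead_coeff q"
      by simp
    then have "coeff (p + q) (degree p) \<noteq> 0"
      using lp lq by simp
    then have "degree p \<le> degree (p + q)"
      by (rule le_degree)
    moreover have "degree (p + q) \<le> degree p"
      using 3 degree_add_le[of p "degree p" q] by simp
    ultimately show ?thesis
      using coeff lp lq by (simp add: standard_def)
  qed
qed (use assms in auto)

lemma standard_smult: "c > 0 \<Longrightarrow> standard p \<Longrightarrow> standard (smult c p)"
  by (auto simp: standard_def)

lemma standard_X_mult: "standard p \<Longrightarrow> standard ([:0, 1:] * p)"
  by (auto simp: standard_def lead_coeff_mult)

lemma nonpos_rooted_0 [simp]: "nonpos_rooted 0"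
  by (simp add: nonpos_rooted_def standard_def nonpos_zeros_def)

lemma nonpos_rooted_smult: "c > 0 \<Longrightarrow> nonpos_rooted p \<Longrightarrow> nonpos_rooted (smult c p)"
  by (auto simp: nonpos_rooted_def standard_smult nonpos_zeros_iff_cpoly)

lemma nonpos_rooted_X_mult: "nonpos_rooted p \<Longrightarrow> nonpos_rooted ([:0, 1:] * p)"
  using standard_X_mult[of p] by (auto simp: nonpos_rooted_def nonpos_zeros_iff_cpoly)

lemma nonpos_rooted_lead_coeff: "nonpos_rooted p \<Longrightarrow> p \<noteq> 0 \<Longrightarrow> lead_coeff p > 0"
  by (simp add: nonpos_rooted_def standard_def)

lemma nonpos_rooted_root:
  "nonpos_rooted p \<Longrightarrow> p \<noteq> 0 \<Longrightarrow> cpoly p z = 0 \<Longrightarrow> z \<in> \<real> \<and> Re z \<le> 0"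
  by (simp add: nonpos_rooted_def nonpos_zeros_iff_cpoly)

lemma nonpos_rooted_nonreal:
  "nonpos_rooted p \<Longrightarrow> p \<noteq> 0 \<Longrightarrow> Im z \<noteq> 0 \<Longrightarrow> cpoly p z \<noteq> 0"
  using nonpos_rooted_root complex_is_Real_iff by blast

lemma nonpos_rooted_poly_pos:
  assumes "nonpos_rooted p" "p \<noteq> 0" "x > 0"
  shows "poly p x > 0"
proof -
  have no_root: "poly p y \<noteq> 0" if "y > 0" for y
    using nonpos_rooted_root[OF assms(1,2), of "of_real y"] that by (auto simp: cpoly_of_real)
  obtain n where n: "\<forall>y\<ge>n. poly p y \<ge> lead_coeff p"
    using poly_pinfty_gt_lc nonpos_rooted_lead_coeff[OF assms(1,2)] by blast
  define y where "y = max n x + 1"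
  have "n \<le> y" "x < y"
    by (simp_all add: y_def)
  then have "poly p y > 0"
    using n nonpos_rooted_lead_coeff[OF assms(1,2)] by (meson order_less_le_trans)
  show ?thesis
  proof (rule ccontr)
    assume "\<not> poly p x > 0"
    then have "poly p x < 0"
      using no_root[OF assms(3)] by linarith
    with \<open>poly p y > 0\<close> obtain w where "x < w" "poly p w = 0"
      using poly_IVT_pos[of x y p] \<open>x < y\<close> by auto
    then show False
      using no_root assms(3) by auto
  qed
qed

lemma nonpos_rooted_poly_nonneg: "nonpos_rooted p \<Longrightarrow> x > 0 \<Longrightarrow> poly p x \<ge> 0"
  using nonpos_rooted_poly_pos[of p x] by (cases "p = 0") auto

lemma nonpos_zerosI:
  assumes "\<And>z. Im z > 0 \<Longrightarrow> cpoly p z \<noteq> 0" and "\<And>x. x > 0 \<Longrightarrow> poly p x \<noteq> 0"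
  shows "nonpos_zeros p"
  unfolding nonpos_zeros_iff_cpoly
proof (intro disjI2 allI impI)
  fix z assume z: "cpoly p z = 0"
  consider "Im z > 0" | "Im z < 0" | "Im z = 0"
    by linarith
  then show "z \<in> \<real> \<and> Re z \<le> 0"
  proof cases
    case 2
    have "cpoly p (cnj z) = 0"
      using z cnj_cpoly[of p z] by simp
    then show ?thesis
      using assms(1)[of "cnj z"] 2 by auto
  next
    case 3
    then have real: "z = of_real (Re z)"
      by (simp add: complex_eq_iff)
    then have "poly p (Re z) = 0"
      using z cpoly_of_real[of p "Re z"] by simp
    then have "\<not> Re z > 0"
      using assms(2) by blast
    then show ?thesis
      using real by (metis Reals_of_real linorder_not_less)
  qed (use assms(1) z in auto)
qed

lemma nonpos_rooted_factor:
  assumes "nonpos_rooted p" "p \<noteq> 0"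
  obtains R :: "real multiset" where "\<And>r. r \<in># R \<Longrightarrow> r \<le> 0"
    "\<And>z. cpoly p z = of_real (lead_coeff p) * (\<Prod>r\<in>#R. (z - of_real r))"
proof -
  define P where "P = map_poly complex_of_real p"
  have "P \<noteq> 0"
    using assms(2) by (simp add: P_def map_poly_of_real_eq_0_iff)
  have lead: "lead_coeff P = of_real (lead_coeff p)"
    unfolding P_def using assms(2) by (intro lead_coeff_map_poly_nz) auto
  have roots: "x \<in> \<real> \<and> Re x \<le> 0" if "x \<in># proots P" for x
    using that \<open>P \<noteq> 0\<close> nonpos_rooted_root[OF assms] by (simp add: cpoly_def P_def)
  define R where "R = image_mset Re (proots P)"
  have "cpoly p z = of_real (lead_coeff p) * (\<Prod>r\<in>#R. (z - of_real r))" for z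
  proof -
    have "cpoly p z = poly P z"
      by (simp add: cpoly_def P_def)
    also have "\<dots> = lead_coeff P * (\<Prod>x\<in>#proots P. (z - x))"
      by (subst complex_poly_decompose_multiset[symmetric, of P]) (simp add: poly_prod_mset)
    also have "(\<Prod>x\<in>#proots P. (z - x)) = (\<Prod>x\<in>#proots P. (z - of_real (Re x)))"
      using roots by (intro arg_cong[where f = prod_mset] image_mset_cong)
        (metis complex_is_Real_iff of_real_Re)
    finally show ?thesis
      using lead by (simp add: R_def multiset.map_comp o_def)
  qed
  moreover have "r \<le> 0" if "r \<in># R" for r
    using roots that by (auto simp: R_def)
  ultimately show ?thesis
    using that by blast
qed

definition im_cross_nonneg :: "real poly \<Rightarrow> real poly \<Rightarrow> bool" where
  "im_cross_nonneg f g \<longleftrightarrow> (\<forall>z. Im z > 0 \<longrightarrow> Im (cpoly f z * cnj (cpoly g z)) \<ge> 0)"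

lemma im_cross_nonneg_add_left:
  "im_cross_nonneg f1 g \<Longrightarrow> im_cross_nonneg f2 g \<Longrightarrow> im_cross_nonneg (f1 + f2) g"
  by (auto simp: im_cross_nonneg_def distrib_right add_nonneg_nonneg)

lemma im_cross_nonneg_add_right:
  "im_cross_nonneg f g1 \<Longrightarrow> im_cross_nonneg f g2 \<Longrightarrow> im_cross_nonneg f (g1 + g2)"
  by (auto simp: im_cross_nonneg_def distrib_left add_nonneg_nonneg)

lemma im_cross_nonneg_X_mult:
  assumes "im_cross_nonneg f g"
  shows "im_cross_nonneg ([:0, 1:] * f) ([:0, 1:] * g)"
  unfolding im_cross_nonneg_def
proof (intro allI impI)
  fix z :: complex
  assume z: "Im z > 0"
  have "cpoly ([:0, 1:] * f) z * cnj (cpoly ([:0, 1:] * g) z)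
      = (z * cnj z) * (cpoly f z * cnj (cpoly g z))"
    by (simp add: mult_ac)
  moreover have "Im (cpoly f z * cnj (cpoly g z)) \<ge> 0"
    using assms z by (simp add: im_cross_nonneg_def)
  ultimately show "Im (cpoly ([:0, 1:] * f) z * cnj (cpoly ([:0, 1:] * g) z)) \<ge> 0"
    by (simp only: complex_mult_cnj) simp
qed

text \<open>Where \<open>f\<close> has no zeros, \<open>im_cross_nonneg f g\<close> says that \<open>g / f\<close> maps the upper
  half-plane into the closed lower half-plane. By the open mapping theorem such a map is constant
  as soon as it takes one real value.\<close>

lemma eq_smult_if_im_cross_nonneg:
  assumes f_nonzero: "\<And>z. Im z > 0 \<Longrightarrow> cpoly f z \<noteq> 0"
    and cross: "im_cross_nonneg f g"
    and w: "Im w > 0" and real_ratio: "cpoly g w = of_real c * cpoly f w"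
  shows "g = smult c f"
proof -
  define U where "U = {z::complex. 0 < Im z}"
  define \<phi> where "\<phi> = (\<lambda>z. cpoly g z / cpoly f z)"
  have "open U" "connected U"
    unfolding U_def by (simp_all add: open_halfspace_Im_gt connected_halfspace_Im_gt)
  have holo: "\<phi> holomorphic_on U"
    unfolding \<phi>_def U_def by (intro holomorphic_intros) (use f_nonzero in auto)
  have Im_\<phi>: "Im (\<phi> z) \<le> 0" if "z \<in> U" for z
  proof -
    have "\<phi> z = cpoly g z * cnj (cpoly f z) / of_real ((cmod (cpoly f z))\<^sup>2)"
      unfolding \<phi>_def using f_nonzero that U_def by (metis complex_div_cnj mem_Collect_eq of_real_power)
    then have "Im (\<phi> z) = - Im (cpoly f z * cnj (cpoly g z)) / (cmod (cpoly f z))\<^sup>2"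
      by (simp only: Im_divide_of_real) simp
    then show ?thesis
      using cross that by (simp add: im_cross_nonneg_def U_def divide_nonpos_nonneg)
  qed
  have "w \<in> U" and \<phi>_w: "\<phi> w = of_real c"
    using w f_nonzero[OF w] real_ratio by (simp_all add: U_def \<phi>_def)
  have "\<phi> constant_on U"
  proof (rule ccontr)
    assume "\<not> \<phi> constant_on U"
    then have "open (\<phi> ` U)"
      using open_mapping_thm[OF holo \<open>open U\<close> \<open>connected U\<close> \<open>open U\<close> subset_refl] by blast
    then obtain e where e: "e > 0" "ball (\<phi> w) e \<subseteq> \<phi> ` U"
      using \<open>w \<in> U\<close> by (meson imageI open_contains_ball)
    moreover have "\<phi> w + of_real (e/2) * \<i> \<in> ball (\<phi> w) e"
      using e by (simp add: dist_norm norm_mult)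
    ultimately obtain z where "z \<in> U" "\<phi> z = \<phi> w + of_real (e/2) * \<i>"
      by auto
    then show False
      using Im_\<phi> \<phi>_w e by fastforce
  qed
  then have "cpoly g z = cpoly (smult c f) z" if "z \<in> U" for z
    using \<phi>_w \<open>w \<in> U\<close> f_nonzero that
    by (auto simp: constant_on_def \<phi>_def U_def divide_eq_eq)
  then show ?thesis
    using cpoly_eq_on_open_imp_eq[OF \<open>open U\<close> \<open>w \<in> U\<close>] by blast
qed

lemma nonpos_rooted_pos_comb:
  assumes f: "nonpos_rooted f" and g: "nonpos_rooted g" and cross: "im_cross_nonneg f g"
    and a: "a > 0" and b: "b > 0"
  shows "nonpos_rooted (smult a f + smult b g)"
proof (cases "f = 0 \<or> g = 0")
  case True
  then show ?thesis
    using nonpos_rooted_smult f g a b by auto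
next
  case False
  then have "f \<noteq> 0" "g \<noteq> 0"
    by auto
  have "standard (smult a f + smult b g)"
    using f g a b by (intro standard_add standard_smult) (auto simp: nonpos_rooted_def)
  moreover have "nonpos_zeros (smult a f + smult b g)"
  proof (rule nonpos_zerosI)
    fix z :: complex
    assume z: "Im z > 0"
    show "cpoly (smult a f + smult b g) z \<noteq> 0"
    proof
      assume "cpoly (smult a f + smult b g) z = 0"
      then have "cpoly g z = of_real (- a / b) * cpoly f z"
        using b by (simp add: field_simps) (metis add.commute add_eq_0_iff of_real_mult)
      then have "g = smult (- a / b) f"
        using eq_smult_if_im_cross_nonneg nonpos_rooted_nonreal[OF f \<open>f \<noteq> 0\<close>] cross z
        by (metis less_irrefl)
      then have "lead_coeff g < 0"
        using nonpos_rooted_lead_coeff[OF f \<open>f \<noteq> 0\<close>] a b by (simp add: mult_neg_pos)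
      then show False
        using nonpos_rooted_lead_coeff[OF g \<open>g \<noteq> 0\<close>] by simp
    qed
  next
    fix x :: real
    assume "x > 0"
    then have "poly f x > 0" "poly g x > 0"
      using nonpos_rooted_poly_pos f g \<open>f \<noteq> 0\<close> \<open>g \<noteq> 0\<close> by auto
    then have "a * poly f x + b * poly g x > 0"
      using a b by (intro add_pos_pos mult_pos_pos)
    then show "poly (smult a f + smult b g) x \<noteq> 0"
      by simp
  qed
  ultimately show ?thesis
    by (simp add: nonpos_rooted_def)
qed

lemma nonpos_rooted_if_im_cross_nonneg:
  assumes f: "nonpos_rooted f" "f \<noteq> 0" and g: "standard g"
    and pos: "\<And>x. x > 0 \<Longrightarrow> g \<noteq> 0 \<Longrightarrow> poly g x > 0"
    and cross: "im_cross_nonneg f g"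
  shows "nonpos_rooted g"
proof (cases "g = 0")
  case False
  have "nonpos_zeros g"
  proof (rule nonpos_zerosI)
    fix z :: complex
    assume z: "Im z > 0"
    show "cpoly g z \<noteq> 0"
    proof
      assume "cpoly g z = 0"
      then have "g = smult 0 f"
        using eq_smult_if_im_cross_nonneg[of f g z 0] nonpos_rooted_nonreal[OF f] cross z by auto
      with False show False
        by simp
    qed
  qed (use pos False in fastforce)
  with g show ?thesis
    by (simp add: nonpos_rooted_def)
qed simp

lemma nonpos_rooted_add_if_im_cross_nonneg:
  assumes f: "nonpos_rooted f" "f \<noteq> 0" and g: "nonpos_rooted g1" "nonpos_rooted g2"
    and cross: "im_cross_nonneg f g1" "im_cross_nonneg f g2"
  shows "nonpos_rooted (g1 + g2)"
proof (rule nonpos_rooted_if_im_cross_nonneg[OF f])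
  show "standard (g1 + g2)"
    using g by (intro standard_add) (auto simp: nonpos_rooted_def)
  show "poly (g1 + g2) x > 0" if "x > 0" "g1 + g2 \<noteq> 0" for x
  proof -
    have "g1 \<noteq> 0 \<or> g2 \<noteq> 0"
      using that(2) by auto
    then have "poly g1 x > 0 \<or> poly g2 x > 0"
      using that(1) g nonpos_rooted_poly_pos by blast
    moreover have "poly g1 x \<ge> 0" "poly g2 x \<ge> 0"
      using that g nonpos_rooted_poly_nonneg by auto
    ultimately show ?thesis
      by auto
  qed
  show "im_cross_nonneg f (g1 + g2)"
    using cross by (rule im_cross_nonneg_add_right)
qed

lemma cpoly_nonzero_limit:
  assumes S: "open S" "connected S"
    and nonzero: "\<And>s z. s > 0 \<Longrightarrow> z \<in> S \<Longrightarrow> cpoly (A + smult s B) z \<noteq> 0"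
    and "A \<noteq> 0" and z0: "z0 \<in> S"
  shows "cpoly A z0 \<noteq> 0"
proof (cases "cpoly A constant_on S")
  case True
  then obtain k where k: "\<And>z. z \<in> S \<Longrightarrow> cpoly A z = k"
    by (auto simp: constant_on_def)
  show ?thesis
  proof
    assume "cpoly A z0 = 0"
    then have "A = 0"
      using k z0 by (intro cpoly_eq_on_open_imp_eq[OF S(1) z0]) auto
    with \<open>A \<noteq> 0\<close> show False
      by simp
  qed
next
  case False
  define F where "F n = cpoly (A + smult (inverse (real (Suc n))) B)" for n
  have "uniform_limit K F (cpoly A) sequentially" if "compact K" for K
  proof -
    have "(\<lambda>n. complex_of_real (inverse (real (Suc n)))) \<longlonglongrightarrow> 0"
      using tendsto_of_real[OF LIMSEQ_inverse_real_of_nat] by (simp only: of_real_0)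
    then have "uniform_limit K (\<lambda>n z. complex_of_real (inverse (real (Suc n)))) (\<lambda>z. 0) sequentially"
      by (simp add: uniform_limit_iff tendsto_iff)
    moreover have "bounded ((\<lambda>z. 0 :: complex) ` K)"
      by (rule finite_imp_bounded) (simp add: image_constant_conv)
    moreover have "bounded (cpoly B ` K)"
      using that by (intro compact_imp_bounded compact_continuous_image
          holomorphic_on_imp_continuous_on holomorphic_on_cpoly)
    ultimately have "uniform_limit K (\<lambda>n z. cpoly A z + of_real (inverse (real (Suc n))) * cpoly B z)
        (\<lambda>z. cpoly A z + 0 * cpoly B z) sequentially"
      by (intro uniform_limit_add uniform_limit_const uniform_lim_mult) auto
    moreover have "F = (\<lambda>n z. cpoly A z + of_real (inverse (real (Suc n))) * cpoly B z)"
      by (simp add: F_def fun_eq_iff)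
    ultimately show ?thesis
      by simp
  qed
  moreover have "F n z \<noteq> 0" if "z \<in> S" for n z
    unfolding F_def using that by (intro nonzero) auto
  ultimately show ?thesis
    using Hurwitz_no_zeros[OF S _ holomorphic_on_cpoly _ False _ z0, of F]
    by (simp add: F_def holomorphic_on_cpoly)
qed

lemma nonpos_rooted_pencil_nonzero:
  assumes pencil: "\<And>s. s > 0 \<Longrightarrow> nonpos_rooted (A + smult s B)" and "A \<noteq> 0" and "s > 0"
  shows "A + smult s B \<noteq> 0"
proof
  assume "A + smult s B = 0"
  then have "smult s B = - A"
    by (simp add: eq_neg_iff_add_eq_0)
  then have "smult (1 / s) (smult s B) = smult (1 / s) (- A)"
    by simp
  then have B: "B = smult (- 1 / s) A"
    using \<open>s > 0\<close> by simp
  have comb: "A + smult t B = smult (1 - t / s) A" for t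
    by (simp add: B smult_diff_left)
  have "nonpos_rooted (smult (1 - t / s) A)" if "t > 0" for t
    using pencil[OF that] by (simp only: comb)
  from this[of "2 * s"] this[of "s / 2"] have neg: "nonpos_rooted (- A)"
    and half: "nonpos_rooted (smult (1 / 2) A)"
    using \<open>s > 0\<close> by simp_all
  have "lead_coeff (- A) > 0"
    by (rule nonpos_rooted_lead_coeff[OF neg]) (simp add: \<open>A \<noteq> 0\<close>)
  moreover have "lead_coeff (smult (1 / 2) A) > 0"
    by (rule nonpos_rooted_lead_coeff[OF half]) (simp add: \<open>A \<noteq> 0\<close>)
  ultimately show False
    by simp
qed

lemma lead_coeff_pos_if_poly_nonneg:
  fixes p :: "real poly"
  assumes "p \<noteq> 0" and nonneg: "\<And>x. x > 0 \<Longrightarrow> poly p x \<ge> 0"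
  shows "lead_coeff p > 0"
proof (rule ccontr)
  assume "\<not> lead_coeff p > 0"
  then have "lead_coeff p < 0"
    using leading_coeff_neq_0[OF \<open>p \<noteq> 0\<close>] by linarith
  then have "lead_coeff (- p) > 0"
    by simp
  then obtain n where n: "\<forall>x\<ge>n. poly (- p) x \<ge> lead_coeff (- p)"
    using poly_pinfty_gt_lc by blast
  then have "poly (- p) (max n 1) \<ge> lead_coeff (- p)"
    by simp
  then have "poly p (max n 1) < 0"
    using \<open>lead_coeff (- p) > 0\<close> by simp
  moreover have "poly p (max n 1) \<ge> 0"
    by (rule nonneg) simp
  ultimately show False
    by simp
qed

lemma nonpos_rooted_limit:
  assumes pencil: "\<And>s. s > 0 \<Longrightarrow> nonpos_rooted (A + smult s B)"
  shows "nonpos_rooted A"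
proof (cases "A = 0")
  case False
  have root: "z \<in> \<real> \<and> Re z \<le> 0" if "s > 0" "cpoly (A + smult s B) z = 0" for s z
    by (rule nonpos_rooted_root[OF pencil[OF that(1)] nonpos_rooted_pencil_nonzero[OF pencil False that(1)] that(2)])
  have upper: "cpoly A z \<noteq> 0" if "Im z > 0" for z
  proof (rule cpoly_nonzero_limit[OF open_halfspace_Im_gt connected_halfspace_Im_gt _ False])
    fix s :: real and w :: complex
    assume "s > 0" "w \<in> {w. 0 < Im w}"
    then show "cpoly (A + smult s B) w \<noteq> 0"
      using root[of s w] complex_is_Real_iff by auto
  qed (use that in simp)
  have right: "poly A x \<noteq> 0" if "x > 0" for x
  proof -
    have "cpoly A (of_real x) \<noteq> 0"
    proof (rule cpoly_nonzero_limit[OF open_halfspace_Re_gt connected_halfspace_Re_gt _ False])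
      fix s :: real and w :: complex
      assume "s > 0" "w \<in> {w. 0 < Re w}"
      then show "cpoly (A + smult s B) w \<noteq> 0"
        using root[of s w] by auto
    qed (use that in simp)
    then show ?thesis
      by (simp add: cpoly_of_real)
  qed
  have "poly A x \<ge> 0" if "x > 0" for x
  proof (rule tendsto_lowerbound)
    show "((\<lambda>s. poly A x + s * poly B x) \<longlongrightarrow> poly A x) (at_right 0)"
      by (auto intro!: tendsto_eq_intros)
    show "\<forall>\<^sub>F s in at_right 0. 0 \<le> poly A x + s * poly B x"
      using nonpos_rooted_poly_nonneg[OF pencil \<open>x > 0\<close>] eventually_at_right_less[of 0]
      by (auto elim: eventually_mono)
  qed simp
  then have "lead_coeff A > 0"
    by (rule lead_coeff_pos_if_poly_nonneg[OF False])
  with nonpos_zerosI[OF upper right] show ?thesis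
    by (simp add: nonpos_rooted_def standard_def)
qed simp

section \<open>Angles of root factors\<close>

text \<open>The argument of a point of the open upper half-plane, written so as to be continuous there.\<close>

definition upper_arg :: "complex \<Rightarrow> real" where
  "upper_arg w = pi / 2 - arctan (Re w / Im w)"

lemma upper_arg_bounds: "0 < upper_arg w" "upper_arg w < pi"
  using arctan_bounded[of "Re w / Im w"] by (auto simp: upper_arg_def)

lemma upper_arg_polar:
  assumes "Im w > 0"
  shows "w = of_real (cmod w) * cis (upper_arg w)"
proof -
  define t where "t = Re w / Im w"
  have sqrt: "sqrt (1 + t\<^sup>2) = cmod w / Im w"
  proof (rule real_sqrt_unique)
    show "(cmod w / Im w)\<^sup>2 = 1 + t\<^sup>2"
      using assms unfolding t_def by (simp add: cmod_power2 power_divide field_simps)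
  qed (use assms in simp)
  have "cmod w > 0"
    using assms by auto
  have "cos (upper_arg w) = sin (arctan t)"
    unfolding upper_arg_def t_def by (simp add: sin_cos_eq)
  then have cos: "cos (upper_arg w) = t / (cmod w / Im w)"
    by (simp only: sin_arctan sqrt)
  have "sin (upper_arg w) = cos (arctan t)"
    unfolding upper_arg_def t_def by (simp add: cos_sin_eq)
  then have sin: "sin (upper_arg w) = 1 / (cmod w / Im w)"
    by (simp only: cos_arctan sqrt)
  show ?thesis
  proof (rule complex_eqI)
    have "cmod w * (t / (cmod w / Im w)) = Re w"
      using \<open>cmod w > 0\<close> assms by (simp add: t_def)
    then show "Re w = Re (of_real (cmod w) * cis (upper_arg w))"
      by (simp add: cos)
    have "cmod w * (1 / (cmod w / Im w)) = Im w"
      using \<open>cmod w > 0\<close> by simp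
    then show "Im w = Im (of_real (cmod w) * cis (upper_arg w))"
      by (simp add: sin)
  qed
qed

lemma upper_arg_diff_mono:
  assumes "Im z > 0" "r1 \<le> r2"
  shows "upper_arg (z - of_real r1) \<le> upper_arg (z - of_real r2)"
proof -
  have "(Re z - r2) / Im z \<le> (Re z - r1) / Im z"
    using assms by (simp add: divide_right_mono)
  then show ?thesis
    by (simp add: upper_arg_def arctan_monotone')
qed

lemma continuous_on_upper_arg:
  "continuous_on S f \<Longrightarrow> (\<And>x. x \<in> S \<Longrightarrow> Im (f x) \<noteq> 0) \<Longrightarrow> continuous_on S (\<lambda>x. upper_arg (f x))"
  unfolding upper_arg_def by (intro continuous_intros) auto

lemma tendsto_upper_arg:
  assumes "c \<noteq> 0"
  shows "((\<lambda>\<epsilon>. upper_arg (Complex c \<epsilon>)) \<longlongrightarrow> (if c < 0 then pi else 0)) (at_right 0)"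
proof -
  have upper_arg: "upper_arg (Complex c \<epsilon>) = pi / 2 - arctan (c * inverse \<epsilon>)" for \<epsilon>
    unfolding upper_arg_def complex.sel divide_inverse ..
  consider "c > 0" | "c < 0"
    using assms by linarith
  then show ?thesis
  proof cases
    case 1
    have "filterlim (\<lambda>\<epsilon>. c * inverse \<epsilon>) at_top (at_right 0)"
      by (rule filterlim_tendsto_pos_mult_at_top[OF tendsto_const 1 filterlim_inverse_at_top_right])
    then have "((\<lambda>\<epsilon>. arctan (c * inverse \<epsilon>)) \<longlongrightarrow> pi / 2) (at_right 0)"
      by (rule filterlim_compose[OF tendsto_arctan_at_top])
    then have "((\<lambda>\<epsilon>. pi / 2 - arctan (c * inverse \<epsilon>)) \<longlongrightarrow> pi / 2 - pi / 2) (at_right 0)"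
      by (rule tendsto_diff[OF tendsto_const])
    with 1 show ?thesis
      by (simp add: upper_arg)
  next
    case 2
    have "filterlim (\<lambda>\<epsilon>. c * inverse \<epsilon>) at_bot (at_right 0)"
      by (rule filterlim_tendsto_neg_mult_at_bot[OF tendsto_const 2 filterlim_inverse_at_top_right])
    then have "((\<lambda>\<epsilon>. arctan (c * inverse \<epsilon>)) \<longlongrightarrow> - (pi / 2)) (at_right 0)"
      by (rule filterlim_compose[OF tendsto_arctan_at_bot])
    then have "((\<lambda>\<epsilon>. pi / 2 - arctan (c * inverse \<epsilon>)) \<longlongrightarrow> pi / 2 - - (pi / 2)) (at_right 0)"
      by (rule tendsto_diff[OF tendsto_const])
    with 2 show ?thesis
      by (simp add: upper_arg)
  qed
qed

definition arg_sum :: "real multiset \<Rightarrow> complex \<Rightarrow> real" where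
  "arg_sum R z = (\<Sum>r\<in>#R. upper_arg (z - of_real r))"

definition roots_above :: "real \<Rightarrow> real multiset \<Rightarrow> int" where
  "roots_above \<tau> R = int (size {#r \<in># R. \<tau> < r#})"

lemma roots_above_empty [simp]: "roots_above \<tau> {#} = 0"
  by (simp add: roots_above_def)

lemma roots_above_add_mset [simp]:
  "roots_above \<tau> (add_mset r R) = (if \<tau> < r then 1 else 0) + roots_above \<tau> R"
  by (simp add: roots_above_def)

lemma roots_above_eq_0: "(\<And>r. r \<in># R \<Longrightarrow> r \<le> \<tau>) \<Longrightarrow> roots_above \<tau> R = 0"
  by (induction R) (auto simp: not_less)

lemma roots_above_cong: "(\<And>r. r \<in># R \<Longrightarrow> \<tau> < r \<longleftrightarrow> \<tau>' < r) \<Longrightarrow> roots_above \<tau> R = roots_above \<tau>' R"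
  by (induction R) auto

lemma roots_above_pos: "r \<in># R \<Longrightarrow> \<tau> < r \<Longrightarrow> roots_above \<tau> R \<ge> 1"
  by (induction R) (auto simp: roots_above_def)

lemma arg_sum_polar:
  assumes "Im z > 0"
  shows "\<exists>\<rho>>0. (\<Prod>r\<in>#R. (z - of_real r)) = of_real \<rho> * cis (arg_sum R z)"
proof (induction R)
  case empty
  show ?case
    by (rule exI[of _ 1]) (simp add: arg_sum_def)
next
  case (add r R)
  then obtain \<rho> where \<rho>: "\<rho> > 0" "(\<Prod>r\<in>#R. (z - of_real r)) = of_real \<rho> * cis (arg_sum R z)"
    by blast
  have "Im (z - of_real r) > 0"
    using assms by simp
  then have "z - of_real r = of_real (cmod (z - of_real r)) * cis (upper_arg (z - of_real r))"
    and "cmod (z - of_real r) > 0"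
    using upper_arg_polar by auto
  then show ?case
    using \<rho> by (intro exI[of _ "cmod (z - of_real r) * \<rho>"])
      (simp add: arg_sum_def cis_mult[symmetric] mult_ac)
qed

lemma continuous_on_arg_sum: "continuous_on {z. Im z > 0} (arg_sum R)"
proof (induction R)
  case (add r R)
  then have "continuous_on {z. Im z > 0} (\<lambda>z. upper_arg (z - of_real r) + arg_sum R z)"
    by (intro continuous_on_add continuous_on_upper_arg continuous_intros) auto
  then show ?case
    by (simp add: arg_sum_def)
qed (simp add: arg_sum_def)

lemma tendsto_arg_sum:
  "\<tau> \<notin># R \<Longrightarrow> ((\<lambda>\<epsilon>. arg_sum R (Complex \<tau> \<epsilon>)) \<longlongrightarrow> pi * roots_above \<tau> R) (at_right 0)"
proof (induction R)
  case (add r R)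
  have "Complex \<tau> \<epsilon> - of_real r = Complex (\<tau> - r) \<epsilon>" for \<epsilon>
    by (simp add: complex_eq_iff)
  moreover have "((\<lambda>\<epsilon>. upper_arg (Complex (\<tau> - r) \<epsilon>)) \<longlongrightarrow> pi * (if \<tau> < r then 1 else 0)) (at_right 0)"
    using tendsto_upper_arg[of "\<tau> - r"] add.prems by (cases "\<tau> < r") auto
  ultimately have "((\<lambda>\<epsilon>. upper_arg (Complex \<tau> \<epsilon> - of_real r) + arg_sum R (Complex \<tau> \<epsilon>))
      \<longlongrightarrow> pi * (if \<tau> < r then 1 else 0) + pi * roots_above \<tau> R) (at_right 0)"
    using add by (intro tendsto_add) auto
  then show ?case
    by (cases "\<tau> < r") (simp_all add: arg_sum_def distrib_left)
qed (simp add: arg_sum_def)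

section \<open>Interlacing multisets\<close>

text \<open>Read from the right, the points of \<open>F\<close> and \<open>G\<close> alternate, beginning with \<open>F\<close>.\<close>

definition interlaces :: "real multiset \<Rightarrow> real multiset \<Rightarrow> bool" where
  "interlaces F G \<longleftrightarrow> (\<forall>\<tau>. roots_above \<tau> F - roots_above \<tau> G \<in> {0, 1})"

lemma interlaces_le_Max:
  assumes "interlaces F G" "s \<in># G"
  shows "F \<noteq> {#} \<and> s \<le> Max_mset F"
proof (rule ccontr)
  assume contra: "\<not> (F \<noteq> {#} \<and> s \<le> Max_mset F)"
  define \<tau> where "\<tau> = (if F = {#} then s - 1 else Max_mset F)"
  have "roots_above \<tau> F = 0"
    by (rule roots_above_eq_0) (auto simp: \<tau>_def)
  moreover have "roots_above \<tau> G \<ge> 1"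
    using contra by (intro roots_above_pos[OF assms(2)]) (auto simp: \<tau>_def not_le simp del: Max_less_iff)
  moreover have "roots_above \<tau> F - roots_above \<tau> G \<in> {0, 1}"
    using assms(1) by (simp add: interlaces_def)
  ultimately show False
    by auto
qed

lemma interlaces_Max_ge_rest:
  assumes "interlaces F G" "r \<in># F - {#Max_mset F#}"
  shows "G \<noteq> {#} \<and> r \<le> Max_mset G"
proof (rule ccontr)
  assume contra: "\<not> (G \<noteq> {#} \<and> r \<le> Max_mset G)"
  define \<tau> where "\<tau> = (if G = {#} then r - 1 else Max_mset G)"
  have "r \<in># F"
    using assms(2) by (rule in_diffD)
  then have "Max_mset F \<in># F" and "r \<le> Max_mset F"
    by (auto intro: Max_in)
  have "\<tau> < r"
    using contra by (auto simp: \<tau>_def not_le simp del: Max_less_iff)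
  then have "roots_above \<tau> F = 1 + roots_above \<tau> (F - {#Max_mset F#})"
    using roots_above_add_mset[of \<tau> "Max_mset F" "F - {#Max_mset F#}"] \<open>r \<le> Max_mset F\<close>
    by (simp add: insert_DiffM[OF \<open>Max_mset F \<in># F\<close>])
  then have "roots_above \<tau> F \<ge> 2"
    using roots_above_pos[OF assms(2) \<open>\<tau> < r\<close>] by linarith
  moreover have "roots_above \<tau> G = 0"
    by (rule roots_above_eq_0) (auto simp: \<tau>_def)
  moreover have "roots_above \<tau> F - roots_above \<tau> G \<in> {0, 1}"
    using assms(1) by (simp add: interlaces_def)
  ultimately show False
    by auto
qed

lemma interlaces_remove_Max:
  assumes interlaces: "interlaces F G" and "G \<noteq> {#}"
  shows "interlaces (F - {#Max_mset F#}) (G - {#Max_mset G#})"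
  unfolding interlaces_def
proof
  fix \<tau>
  define m s where "m = Max_mset F" and "s = Max_mset G"
  define F' G' where "F' = F - {#m#}" and "G' = G - {#s#}"
  have "s \<in># G"
    using \<open>G \<noteq> {#}\<close> by (simp add: s_def)
  then have "F \<noteq> {#}" "s \<le> m"
    using interlaces_le_Max[OF interlaces] by (auto simp: m_def)
  then have F: "F = add_mset m F'" and G: "G = add_mset s G'"
    using \<open>s \<in># G\<close> by (simp_all add: m_def F'_def G'_def)
  have D: "roots_above \<tau> F - roots_above \<tau> G \<in> {0, 1}"
    using interlaces by (simp add: interlaces_def)
  consider "\<tau> < s" | "s \<le> \<tau>" "\<tau> < m" | "m \<le> \<tau>"
    by linarith
  then show "roots_above \<tau> F' - roots_above \<tau> G' \<in> {0, 1}"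
  proof cases
    case 2
    have "r \<le> s" if "r \<in># G" for r
      using that by (simp add: s_def)
    then have "roots_above \<tau> G = 0"
      using 2 by (intro roots_above_eq_0) fastforce
    moreover have "roots_above \<tau> F \<ge> 1"
      using 2 F by (intro roots_above_pos[of m]) auto
    ultimately show ?thesis
      using D F G 2 by auto
  qed (use D F G \<open>s \<le> m\<close> in auto)
qed

text \<open>Pairing each point of \<open>F\<close> with the next point of \<open>G\<close> below it.\<close>

lemma interlaces_sum_bounds:
  fixes \<psi> :: "real \<Rightarrow> real"
  assumes "mono \<psi>" and nonneg: "\<And>x. \<psi> x \<ge> 0"
  shows "interlaces F G \<Longrightarrow> (\<And>r. r \<in># F \<Longrightarrow> r \<le> b) \<Longrightarrow>
    0 \<le> (\<Sum>r\<in>#F. \<psi> r) - (\<Sum>r\<in>#G. \<psi> r) \<and> (\<Sum>r\<in>#F. \<psi> r) - (\<Sum>r\<in>#G. \<psi> r) \<le> \<psi> b"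
proof (induction "size F" arbitrary: F G b rule: less_induct)
  case less
  define m F' where "m = Max_mset F" and "F' = F - {#m#}"
  have F: "F \<noteq> {#} \<Longrightarrow> F = add_mset m F'" and "F \<noteq> {#} \<Longrightarrow> \<psi> m \<le> \<psi> b"
    using less.prems(2) \<open>mono \<psi>\<close> by (simp_all add: m_def F'_def monoD)
  show ?case
  proof (cases "G = {#}")
    case True
    then have "F' = {#}"
      using interlaces_Max_ge_rest[OF less.prems(1)] by (auto simp: F'_def m_def)
    show ?thesis
    proof (cases "F = {#}")
      case False
      then have "(\<Sum>r\<in>#F. \<psi> r) - (\<Sum>r\<in>#G. \<psi> r) = \<psi> m"
        using F \<open>F' = {#}\<close> \<open>G = {#}\<close> by simp
      then show ?thesis
        using False \<open>F \<noteq> {#} \<Longrightarrow> \<psi> m \<le> \<psi> b\<close> nonneg[of m] by simp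
    qed (use True nonneg[of b] in simp)
  next
    case False
    define s G' where "s = Max_mset G" and "G' = G - {#s#}"
    have G: "G = add_mset s G'"
      using False by (simp add: s_def G'_def)
    have "F \<noteq> {#}" "s \<le> m"
      using interlaces_le_Max[OF less.prems(1), of s] G by (simp_all add: m_def)
    have "0 \<le> (\<Sum>r\<in>#F'. \<psi> r) - (\<Sum>r\<in>#G'. \<psi> r) \<and> (\<Sum>r\<in>#F'. \<psi> r) - (\<Sum>r\<in>#G'. \<psi> r) \<le> \<psi> s"
    proof (rule less.hyps)
      show "size F' < size F"
        using F \<open>F \<noteq> {#}\<close> by simp
      show "interlaces F' G'"
        using interlaces_remove_Max[OF less.prems(1) False] by (simp add: F'_def G'_def m_def s_def)
      show "r \<le> s" if "r \<in># F'" for r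
        using interlaces_Max_ge_rest[OF less.prems(1)] that by (simp add: F'_def m_def s_def)
    qed
    moreover have "\<psi> s \<le> \<psi> m"
      using \<open>mono \<psi>\<close> \<open>s \<le> m\<close> by (rule monoD)
    moreover have "(\<Sum>r\<in>#F. \<psi> r) - (\<Sum>r\<in>#G. \<psi> r) = \<psi> m - \<psi> s + ((\<Sum>r\<in>#F'. \<psi> r) - (\<Sum>r\<in>#G'. \<psi> r))"
      using F[OF \<open>F \<noteq> {#}\<close>] G by simp
    ultimately show ?thesis
      using \<open>F \<noteq> {#} \<Longrightarrow> \<psi> m \<le> \<psi> b\<close> \<open>F \<noteq> {#}\<close> by linarith
  qed
qed

lemma exists_gap_above:
  fixes \<tau> :: real
  assumes "finite A"
  obtains \<tau>' where "\<tau> < \<tau>'" "\<tau>' \<notin> A" "\<And>r. r \<in> A \<Longrightarrow> \<tau> < r \<longleftrightarrow> \<tau>' < r"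
proof -
  define B where "B = insert (\<tau> + 1) {r \<in> A. \<tau> < r}"
  have "finite B"
    using assms by (simp add: B_def)
  then have "Min B \<in> B"
    by (rule Min_in) (simp add: B_def)
  then have "\<tau> < Min B"
    by (auto simp: B_def)
  define \<tau>' where "\<tau>' = (\<tau> + Min B) / 2"
  have "\<tau> < \<tau>'" "\<tau>' < Min B"
    using \<open>\<tau> < Min B\<close> by (simp_all add: \<tau>'_def)
  moreover have Min: "Min B \<le> r" if "r \<in> A" "\<tau> < r" for r
    using \<open>finite B\<close> that by (simp add: B_def)
  ultimately show ?thesis
  proof (intro that[of \<tau>'])
    show "\<tau>' \<notin> A"
      using \<open>\<tau> < \<tau>'\<close> \<open>\<tau>' < Min B\<close> Min by fastforce
    show "\<tau> < r \<longleftrightarrow> \<tau>' < r" if "r \<in> A" for r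
      using \<open>\<tau> < \<tau>'\<close> \<open>\<tau>' < Min B\<close> Min[OF that] by linarith
  qed
qed

lemma pos_on_connected_if_nonzero:
  fixes h :: "'a::topological_space \<Rightarrow> real"
  assumes "connected S" "continuous_on S h" "\<And>x. x \<in> S \<Longrightarrow> h x \<noteq> 0"
    and "a \<in> S" "h a > 0" "b \<in> S"
  shows "h b > 0"
proof (rule ccontr)
  assume "\<not> h b > 0"
  then have "h b < 0"
    using assms(3,6) by force
  moreover have "connected (h ` S)"
    by (rule connected_continuous_image[OF assms(2,1)])
  ultimately have "0 \<in> h ` S"
    using assms(4-6) unfolding connected_iff_interval by (meson imageI less_imp_le)
  then show False
    using assms(3) by auto
qed

lemma exists_pos_comb_eq_0:
  assumes "F * cnj G = - of_real \<rho>" "\<rho> > 0" "G \<noteq> 0"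
  shows "\<exists>t>0. F + of_real t * G = 0"
proof -
  define t where "t = \<rho> / (cmod G)\<^sup>2"
  have "F * of_real ((cmod G)\<^sup>2) = - of_real \<rho> * G"
    using assms(1) by (metis complex_norm_square mult.assoc mult.commute)
  then have "F = - of_real t * G"
    using assms(3) by (simp add: t_def field_simps)
  moreover have "t > 0"
    using assms(2,3) by (simp add: t_def)
  ultimately show ?thesis
    by (intro exI[of _ t]) simp
qed

locale nonpos_rooted_pencils =
  fixes f g :: "real poly" and Rf Rg :: "real multiset"
  assumes f: "nonpos_rooted f" "f \<noteq> 0" and g: "nonpos_rooted g" "g \<noteq> 0"
    and pencil: "\<And>t. t > 0 \<Longrightarrow> nonpos_rooted (f + smult t g)"
    and pencil_X: "\<And>t. t > 0 \<Longrightarrow> nonpos_rooted (f + smult t ([:0, 1:] * g))"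
    and Rf_nonpos: "\<And>r. r \<in># Rf \<Longrightarrow> r \<le> 0" and Rg_nonpos: "\<And>r. r \<in># Rg \<Longrightarrow> r \<le> 0"
    and f_factor: "\<And>z. cpoly f z = of_real (lead_coeff f) * (\<Prod>r\<in>#Rf. (z - of_real r))"
    and g_factor: "\<And>z. cpoly g z = of_real (lead_coeff g) * (\<Prod>r\<in>#Rg. (z - of_real r))"
begin

lemma cross_polar:
  assumes "Im z > 0"
  shows "\<exists>\<rho>>0. cpoly f z * cnj (cpoly g z) = of_real \<rho> * cis (arg_sum Rf z - arg_sum Rg z)"
proof -
  obtain \<rho>f \<rho>g where \<rho>: "\<rho>f > 0" "\<rho>g > 0"
    "(\<Prod>r\<in>#Rf. (z - of_real r)) = of_real \<rho>f * cis (arg_sum Rf z)"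
    "(\<Prod>r\<in>#Rg. (z - of_real r)) = of_real \<rho>g * cis (arg_sum Rg z)"
    using arg_sum_polar[OF assms] by meson
  define \<rho> where "\<rho> = lead_coeff f * \<rho>f * lead_coeff g * \<rho>g"
  have "cpoly f z * cnj (cpoly g z) = of_real \<rho> * (cis (arg_sum Rf z) * cis (- arg_sum Rg z))"
    by (simp add: f_factor g_factor \<rho> \<rho>_def cis_cnj mult_ac)
  moreover have "\<rho> > 0"
    using \<rho> nonpos_rooted_lead_coeff f g by (simp add: \<rho>_def)
  ultimately show ?thesis
    by (intro exI[of _ \<rho>]) (simp add: cis_mult)
qed

text \<open>A value \<open>pi\<close> of the angle difference would make \<open>f + t g\<close> vanish at \<open>z\<close> for some \<open>t > 0\<close>.\<close>

lemma arg_diff_ne_pi: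
  assumes z: "Im z > 0"
  shows "arg_sum Rf z - arg_sum Rg z \<noteq> pi"
proof
  assume "arg_sum Rf z - arg_sum Rg z = pi"
  then obtain \<rho> where "\<rho> > 0" "cpoly f z * cnj (cpoly g z) = - of_real \<rho>"
    using cross_polar[OF z] by auto
  moreover have "cpoly g z \<noteq> 0"
    using nonpos_rooted_nonreal[OF g] z by simp
  ultimately obtain t where t: "t > 0" "cpoly f z + of_real t * cpoly g z = 0"
    using exists_pos_comb_eq_0 by blast
  have "cpoly (f + smult t g) z \<noteq> 0"
    using nonpos_rooted_nonreal[OF pencil[OF t(1)] nonpos_rooted_pencil_nonzero[OF pencil f(2) t(1)]] z by simp
  with t(2) show False
    by simp
qed

text \<open>Likewise with \<open>z g\<close> in place of \<open>g\<close>, whose angle is larger by \<open>upper_arg z\<close>.\<close>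

lemma arg_diff_ne_upper_arg_minus_pi:
  assumes z: "Im z > 0"
  shows "arg_sum Rf z - arg_sum Rg z \<noteq> upper_arg z - pi"
proof
  assume diff: "arg_sum Rf z - arg_sum Rg z = upper_arg z - pi"
  obtain \<rho> where \<rho>: "\<rho> > 0" "cpoly f z * cnj (cpoly g z) = of_real \<rho> * cis (arg_sum Rf z - arg_sum Rg z)"
    using cross_polar[OF z] by blast
  have "cmod z > 0"
    using z by auto
  have "cpoly f z * cnj (z * cpoly g z) = cnj z * (cpoly f z * cnj (cpoly g z))"
    by (simp add: mult_ac)
  also have "\<dots> = of_real (cmod z * \<rho>) * (cis (- upper_arg z) * cis (upper_arg z - pi))"
    by (subst upper_arg_polar[OF z], subst \<rho>(2)) (simp add: diff cis_cnj mult_ac)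
  also have "\<dots> = - of_real (cmod z * \<rho>)"
    by (simp add: cis_mult complex_eq_iff)
  finally have "cpoly f z * cnj (z * cpoly g z) = - of_real (cmod z * \<rho>)" .
  moreover have "z * cpoly g z \<noteq> 0"
    using nonpos_rooted_nonreal[OF g] z by auto
  moreover have "cmod z * \<rho> > 0"
    using \<open>cmod z > 0\<close> \<rho>(1) by simp
  ultimately obtain t where t: "t > 0" "cpoly f z + of_real t * (z * cpoly g z) = 0"
    using exists_pos_comb_eq_0 by blast
  have "cpoly (f + smult t ([:0, 1:] * g)) z \<noteq> 0"
    using nonpos_rooted_nonreal[OF pencil_X[OF t(1)] nonpos_rooted_pencil_nonzero[OF pencil_X f(2) t(1)]] z
    by simp
  with t(2) show False
    by (simp add: mult.left_commute)
qed

lemma tendsto_arg_diff: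
  assumes "\<tau> \<notin># Rf" "\<tau> \<notin># Rg"
  shows "((\<lambda>\<epsilon>. arg_sum Rf (Complex \<tau> \<epsilon>) - arg_sum Rg (Complex \<tau> \<epsilon>))
    \<longlongrightarrow> pi * (roots_above \<tau> Rf - roots_above \<tau> Rg)) (at_right 0)"
  using tendsto_diff[OF tendsto_arg_sum[OF assms(1)] tendsto_arg_sum[OF assms(2)]]
  by (simp add: right_diff_distrib)

lemma arg_diff_bounds_near_positive_axis:
  obtains \<epsilon> where "\<epsilon> > 0" "upper_arg (Complex 1 \<epsilon>) - pi < arg_sum Rf (Complex 1 \<epsilon>) - arg_sum Rg (Complex 1 \<epsilon>)"
    "arg_sum Rf (Complex 1 \<epsilon>) - arg_sum Rg (Complex 1 \<epsilon>) < pi"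
proof -
  define diff where "diff = (\<lambda>\<epsilon>. arg_sum Rf (Complex 1 \<epsilon>) - arg_sum Rg (Complex 1 \<epsilon>))"
  have "1 \<notin># Rf" "1 \<notin># Rg"
    using Rf_nonpos Rg_nonpos by fastforce+
  moreover have "roots_above 1 Rf = 0" "roots_above 1 Rg = 0"
    using Rf_nonpos Rg_nonpos by (auto intro!: roots_above_eq_0 order_trans[OF _ zero_le_one])
  ultimately have diff: "(diff \<longlongrightarrow> 0) (at_right 0)"
    using tendsto_arg_diff[of 1] by (simp add: diff_def)
  moreover have "((\<lambda>\<epsilon>. upper_arg (Complex 1 \<epsilon>)) \<longlongrightarrow> 0) (at_right 0)"
    using tendsto_upper_arg[of 1] by simp
  ultimately have "((\<lambda>\<epsilon>. diff \<epsilon> - upper_arg (Complex 1 \<epsilon>)) \<longlongrightarrow> 0) (at_right 0)"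
    using tendsto_diff by fastforce
  then have "\<forall>\<^sub>F \<epsilon> in at_right 0. 0 < \<epsilon> \<and> diff \<epsilon> < pi \<and> - pi < diff \<epsilon> - upper_arg (Complex 1 \<epsilon>)"
    using diff by (intro eventually_conj eventually_at_right_less order_tendstoD) auto
  then obtain \<epsilon> where "0 < \<epsilon>" "diff \<epsilon> < pi" "- pi < diff \<epsilon> - upper_arg (Complex 1 \<epsilon>)"
    using eventually_happens'[OF trivial_limit_at_right_real] by blast
  then show ?thesis
    by (intro that[of \<epsilon>]) (simp_all add: diff_def)
qed

text \<open>Both bounds hold near the positive real axis, and the angle difference can never reach
  them.\<close>

lemma arg_diff_bounds:
  assumes z: "Im z > 0"
  shows "upper_arg z - pi < arg_sum Rf z - arg_sum Rg z" "arg_sum Rf z - arg_sum Rg z < pi"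
proof -
  define U where "U = {z. Im z > 0}"
  define diff where "diff z = arg_sum Rf z - arg_sum Rg z" for z
  obtain \<epsilon> where \<epsilon>: "\<epsilon> > 0" "upper_arg (Complex 1 \<epsilon>) - pi < diff (Complex 1 \<epsilon>)" "diff (Complex 1 \<epsilon>) < pi"
    unfolding diff_def by (rule arg_diff_bounds_near_positive_axis)
  have "connected U" "Complex 1 \<epsilon> \<in> U" "z \<in> U"
    using z \<epsilon>(1) by (simp_all add: U_def connected_halfspace_Im_gt)
  have cont: "continuous_on U diff"
    unfolding diff_def U_def by (intro continuous_on_diff continuous_on_arg_sum)
  have cont_arg: "continuous_on U upper_arg"
    using continuous_on_upper_arg[of U "\<lambda>z. z", OF continuous_on_id] by (simp add: U_def)
  have "pi - diff z > 0"
  proof (rule pos_on_connected_if_nonzero[OF \<open>connected U\<close> _ _ \<open>Complex 1 \<epsilon> \<in> U\<close> _ \<open>z \<in> U\<close>])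
    show "continuous_on U (\<lambda>z. pi - diff z)"
      by (intro continuous_on_diff continuous_on_const cont)
    show "pi - diff w \<noteq> 0" if "w \<in> U" for w
      using arg_diff_ne_pi[of w] that by (auto simp: U_def diff_def)
  qed (use \<epsilon> in simp)
  moreover have "diff z - upper_arg z + pi > 0"
  proof (rule pos_on_connected_if_nonzero[OF \<open>connected U\<close> _ _ \<open>Complex 1 \<epsilon> \<in> U\<close> _ \<open>z \<in> U\<close>])
    show "continuous_on U (\<lambda>z. diff z - upper_arg z + pi)"
      by (intro continuous_on_add continuous_on_diff continuous_on_const cont cont_arg)
    show "diff w - upper_arg w + pi \<noteq> 0" if "w \<in> U" for w
      using arg_diff_ne_upper_arg_minus_pi[of w] that by (auto simp: U_def diff_def)
  qed (use \<epsilon> in simp)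
  ultimately show "upper_arg z - pi < arg_sum Rf z - arg_sum Rg z" "arg_sum Rf z - arg_sum Rg z < pi"
    by (simp_all add: diff_def)
qed

text \<open>Let \<open>z\<close> tend to a point \<open>\<tau> < 0\<close> of the real axis in the bounds above.\<close>

lemma roots_above_diff_at_neg_nonroot:
  assumes "\<tau> < 0" "\<tau> \<notin># Rf" "\<tau> \<notin># Rg"
  shows "roots_above \<tau> Rf - roots_above \<tau> Rg \<in> {0, 1}"
proof -
  define D where "D = roots_above \<tau> Rf - roots_above \<tau> Rg"
  define diff where "diff = (\<lambda>\<epsilon>. arg_sum Rf (Complex \<tau> \<epsilon>) - arg_sum Rg (Complex \<tau> \<epsilon>))"
  have diff: "(diff \<longlongrightarrow> pi * D) (at_right 0)"
    unfolding diff_def D_def using tendsto_arg_diff assms(2,3) by simp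
  have arg: "((\<lambda>\<epsilon>. upper_arg (Complex \<tau> \<epsilon>) - pi) \<longlongrightarrow> pi - pi) (at_right 0)"
    using tendsto_upper_arg[of \<tau>] assms(1) by (intro tendsto_diff) auto
  have bounds: "upper_arg (Complex \<tau> \<epsilon>) - pi \<le> diff \<epsilon> \<and> diff \<epsilon> \<le> pi" if "\<epsilon> > 0" for \<epsilon>
    using arg_diff_bounds[of "Complex \<tau> \<epsilon>"] that by (simp add: diff_def)
  have "pi * D \<le> pi"
    by (rule tendsto_le[OF trivial_limit_at_right_real tendsto_const diff])
      (use eventually_at_right_less[of 0] bounds in \<open>auto elim: eventually_mono\<close>)
  moreover have "pi - pi \<le> pi * D"
    by (rule tendsto_le[OF trivial_limit_at_right_real diff arg])
      (use eventually_at_right_less[of 0] bounds in \<open>auto elim: eventually_mono\<close>)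
  ultimately have "0 \<le> D" "D \<le> 1"
    using pi_gt_zero by (simp_all add: mult_le_cancel_left1 zero_le_mult_iff)
  then show ?thesis
    by (auto simp: D_def)
qed

lemma roots_interlace: "interlaces Rf Rg"
  unfolding interlaces_def
proof
  fix \<tau>
  obtain \<tau>' where "\<tau>' \<notin> set_mset (Rf + Rg)"
    and same_side: "\<And>r. r \<in> set_mset (Rf + Rg) \<Longrightarrow> \<tau> < r \<longleftrightarrow> \<tau>' < r"
    using exists_gap_above[of "set_mset (Rf + Rg)" \<tau>] by auto
  have "roots_above \<tau> Rf = roots_above \<tau>' Rf" "roots_above \<tau> Rg = roots_above \<tau>' Rg"
    by (intro roots_above_cong same_side; simp)+
  moreover have "roots_above \<tau>' Rf - roots_above \<tau>' Rg \<in> {0, 1}"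
  proof (cases "\<tau>' < 0")
    case False
    then have "r \<le> \<tau>'" if "r \<in># Rf + Rg" for r
      using that Rf_nonpos Rg_nonpos by fastforce
    then show ?thesis
      by (simp add: roots_above_eq_0)
  qed (use roots_above_diff_at_neg_nonroot \<open>\<tau>' \<notin> set_mset (Rf + Rg)\<close> in auto)
  ultimately show "roots_above \<tau> Rf - roots_above \<tau> Rg \<in> {0, 1}"
    by simp
qed

lemma arg_diff_between:
  assumes z: "Im z > 0"
  shows "0 \<le> arg_sum Rf z - arg_sum Rg z" "arg_sum Rf z - arg_sum Rg z \<le> upper_arg z"
proof -
  define \<psi> where "\<psi> r = upper_arg (z - of_real r)" for r
  have "mono \<psi>"
    unfolding \<psi>_def by (intro monoI upper_arg_diff_mono z)
  moreover have "\<psi> x \<ge> 0" for x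
    using upper_arg_bounds(1) by (simp add: \<psi>_def less_imp_le)
  ultimately have "0 \<le> (\<Sum>r\<in>#Rf. \<psi> r) - (\<Sum>r\<in>#Rg. \<psi> r) \<and> (\<Sum>r\<in>#Rf. \<psi> r) - (\<Sum>r\<in>#Rg. \<psi> r) \<le> \<psi> 0"
    using interlaces_sum_bounds roots_interlace Rf_nonpos by blast
  then show "0 \<le> arg_sum Rf z - arg_sum Rg z" "arg_sum Rf z - arg_sum Rg z \<le> upper_arg z"
    by (simp_all add: arg_sum_def \<psi>_def)
qed

end

lemma im_cross_nonneg_if_pencils:
  assumes f: "nonpos_rooted f" and g: "nonpos_rooted g"
    and pencil: "\<And>t. t > 0 \<Longrightarrow> nonpos_rooted (f + smult t g)"
    and pencil_X: "\<And>t. t > 0 \<Longrightarrow> nonpos_rooted (f + smult t ([:0, 1:] * g))"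
  shows "im_cross_nonneg f g" "im_cross_nonneg ([:0, 1:] * g) f"
proof -
  have "Im (cpoly f z * cnj (cpoly g z)) \<ge> 0 \<and> Im (cpoly ([:0, 1:] * g) z * cnj (cpoly f z)) \<ge> 0"
    if z: "Im z > 0" for z
  proof (cases "f = 0 \<or> g = 0")
    case False
    then have "f \<noteq> 0" "g \<noteq> 0"
      by auto
    obtain Rf Rg where "\<And>r. r \<in># Rf \<Longrightarrow> r \<le> 0" "\<And>r. r \<in># Rg \<Longrightarrow> r \<le> 0"
      "\<And>z. cpoly f z = of_real (lead_coeff f) * (\<Prod>r\<in>#Rf. (z - of_real r))"
      "\<And>z. cpoly g z = of_real (lead_coeff g) * (\<Prod>r\<in>#Rg. (z - of_real r))"
      using nonpos_rooted_factor[OF f \<open>f \<noteq> 0\<close>] nonpos_rooted_factor[OF g \<open>g \<noteq> 0\<close>] by metis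
    then interpret nonpos_rooted_pencils f g Rf Rg
      using f g \<open>f \<noteq> 0\<close> \<open>g \<noteq> 0\<close> pencil pencil_X by unfold_locales auto
    define a where "a = arg_sum Rf z - arg_sum Rg z"
    obtain \<rho> where \<rho>: "\<rho> > 0" "cpoly f z * cnj (cpoly g z) = of_real \<rho> * cis a"
      using cross_polar[OF z] unfolding a_def by blast
    have a: "0 \<le> a" "a \<le> upper_arg z" "upper_arg z < pi"
      using arg_diff_between[OF z] upper_arg_bounds(2) unfolding a_def by auto
    have "cpoly ([:0, 1:] * g) z * cnj (cpoly f z) = z * cnj (cpoly f z * cnj (cpoly g z))"
      by simp
    also have "\<dots> = of_real (cmod z * \<rho>) * (cis (upper_arg z) * cis (- a))"
      by (subst upper_arg_polar[OF z], subst \<rho>(2)) (simp add: cis_cnj mult_ac)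
    also have "\<dots> = of_real (cmod z * \<rho>) * cis (upper_arg z - a)"
      by (simp add: cis_mult)
    finally have "Im (cpoly ([:0, 1:] * g) z * cnj (cpoly f z)) = cmod z * \<rho> * sin (upper_arg z - a)"
      by simp
    moreover have "Im (cpoly f z * cnj (cpoly g z)) = \<rho> * sin a"
      using \<rho>(2) by simp
    moreover have "sin a \<ge> 0" "sin (upper_arg z - a) \<ge> 0"
      using a by (auto intro!: sin_ge_zero)
    ultimately show ?thesis
      using \<rho>(1) by simp
  qed auto
  then show "im_cross_nonneg f g" "im_cross_nonneg ([:0, 1:] * g) f"
    unfolding im_cross_nonneg_def by blast+
qed

section \<open>Interpolatory squares\<close>

text \<open>The cube condition for a 2-face with corners \<open>a, b, c, d\<close> at \<open>00, 01, 10, 11\<close>.\<close>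

definition interpolatory_square :: "real poly \<Rightarrow> real poly \<Rightarrow> real poly \<Rightarrow> real poly \<Rightarrow> bool" where
  "interpolatory_square a b c d \<longleftrightarrow>
     (\<forall>e1 e2 l1 r1 l2 r2. l1 > 0 \<longrightarrow> r1 > 0 \<longrightarrow> l2 > 0 \<longrightarrow> r2 > 0 \<longrightarrow>
        nonpos_rooted (interp_pair e1 l1 r1 (interp_pair e2 l2 r2 a b) (interp_pair e2 l2 r2 c d)))"

lemma interp_pair_swap:
  "interp_pair e1 l1 r1 (interp_pair e2 l2 r2 a b) (interp_pair e2 l2 r2 c d) =
   interp_pair e2 l2 r2 (interp_pair e1 l1 r1 a c) (interp_pair e1 l1 r1 b d)"
  by (cases e1; cases e2) (simp_all add: interp_pair_def algebra_simps smult_add_right)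

lemma interpolatory_square_transpose:
  "interpolatory_square a b c d \<Longrightarrow> interpolatory_square a c b d"
  unfolding interpolatory_square_def by (metis interp_pair_swap)

lemma nonpos_rooted_pencil_swap:
  assumes "\<And>t. t > 0 \<Longrightarrow> nonpos_rooted (u + smult t v)" "t > 0"
  shows "nonpos_rooted (v + smult t u)"
proof -
  have "v + smult t u = smult t (u + smult (1 / t) v)"
    using \<open>t > 0\<close> by (simp add: smult_add_right)
  then show ?thesis
    using assms by (simp add: nonpos_rooted_smult)
qed

lemma interpolatory_square_pencils:
  assumes square: "interpolatory_square a b c d" and "t > 0"
  shows "nonpos_rooted (a + smult t b)" "nonpos_rooted (a + smult t ([:0, 1:] * b))"
    "nonpos_rooted (c + smult t d)" "nonpos_rooted (c + smult t ([:0, 1:] * d))"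
proof -
  note nonpos_square = square[unfolded interpolatory_square_def, rule_format]
  show "nonpos_rooted (a + smult t b)"
  proof (rule nonpos_rooted_limit[where B = "c + smult t d"])
    fix s :: real
    assume "s > 0"
    then show "nonpos_rooted (a + smult t b + smult s (c + smult t d))"
      using nonpos_square[of s 1 t 1 False False] \<open>t > 0\<close>
      by (simp add: interp_pair_def algebra_simps smult_add_right)
  qed
  show "nonpos_rooted (a + smult t ([:0, 1:] * b))"
  proof (rule nonpos_rooted_limit[where B = "c + smult t ([:0, 1:] * d)"])
    fix s :: real
    assume "s > 0"
    then show "nonpos_rooted (a + smult t ([:0, 1:] * b) + smult s (c + smult t ([:0, 1:] * d)))"
      using nonpos_square[of s 1 1 t False True] \<open>t > 0\<close>
      by (simp add: interp_pair_def algebra_simps smult_add_right)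
  qed
  show "nonpos_rooted (c + smult t d)"
  proof (rule nonpos_rooted_limit[where B = "a + smult t b"])
    fix s :: real
    assume "s > 0"
    then show "nonpos_rooted (c + smult t d + smult s (a + smult t b))"
      using nonpos_square[of 1 s t 1 False False] \<open>t > 0\<close>
      by (simp add: interp_pair_def algebra_simps smult_add_right)
  qed
  show "nonpos_rooted (c + smult t ([:0, 1:] * d))"
  proof (rule nonpos_rooted_limit[where B = "a + smult t ([:0, 1:] * b)"])
    fix s :: real
    assume "s > 0"
    then show "nonpos_rooted (c + smult t ([:0, 1:] * d) + smult s (a + smult t ([:0, 1:] * b)))"
      using nonpos_square[of 1 s 1 t False True] \<open>t > 0\<close>
      by (simp add: interp_pair_def algebra_simps smult_add_right)
  qed
qed

lemma interpolatory_square_corners: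
  assumes square: "interpolatory_square a b c d"
  shows "nonpos_rooted a" "nonpos_rooted b" "nonpos_rooted c" "nonpos_rooted d"
proof -
  note pencils = interpolatory_square_pencils[OF square]
    interpolatory_square_pencils[OF interpolatory_square_transpose[OF square]]
  show "nonpos_rooted a" "nonpos_rooted c"
    using nonpos_rooted_limit pencils by blast+
  show "nonpos_rooted b"
    using nonpos_rooted_limit[of b d] pencils by blast
  show "nonpos_rooted d"
    using nonpos_rooted_limit[of d b] nonpos_rooted_pencil_swap[of b d] pencils by blast
qed

lemma interpolatory_square_im_cross_nonneg:
  assumes square: "interpolatory_square a b c d"
  shows "im_cross_nonneg a b" "im_cross_nonneg ([:0, 1:] * b) a"
    "im_cross_nonneg c d" "im_cross_nonneg ([:0, 1:] * d) c"
  using im_cross_nonneg_if_pencils interpolatory_square_pencils[OF square]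
    interpolatory_square_corners[OF square] by blast+

text \<open>A corner \<open>f \<noteq> 0\<close> with nonnegative cross terms against both summands shows that the sum has
  only nonpositive zeros. If there is no such corner, the sum is itself an interpolation of the
  square with all weights \<open>1\<close>.\<close>

lemma interpolatory_square_anti_diagonal:
  assumes square: "interpolatory_square a b c d"
  shows "nonpos_rooted (b + c)"
proof -
  note corners = interpolatory_square_corners[OF square]
  note cross = interpolatory_square_im_cross_nonneg[OF square]
    interpolatory_square_im_cross_nonneg[OF interpolatory_square_transpose[OF square]]
  consider "a \<noteq> 0" | "d \<noteq> 0" | "a = 0" "d = 0"
    by blast
  then show ?thesis
  proof cases
    case 1
    show ?thesis
      by (rule nonpos_rooted_add_if_im_cross_nonneg[OF corners(1) 1 corners(2,3) cross(1,5)])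
  next
    case 2
    then show ?thesis
      using nonpos_rooted_add_if_im_cross_nonneg[OF nonpos_rooted_X_mult[OF corners(4)] _
          corners(2,3) cross(8,4)]
      by simp
  next
    case 3
    then show ?thesis
      using square[unfolded interpolatory_square_def, rule_format, of 1 1 1 1 False False]
      by (simp add: interp_pair_def add.commute)
  qed
qed

lemma interpolatory_square_diagonal:
  assumes square: "interpolatory_square a b c d"
  shows "nonpos_rooted (a + [:0, 1:] * d)"
proof -
  note corners = interpolatory_square_corners[OF square]
  note cross = interpolatory_square_im_cross_nonneg[OF square]
    interpolatory_square_im_cross_nonneg[OF interpolatory_square_transpose[OF square]]
  consider "b \<noteq> 0" | "c \<noteq> 0" | "b = 0" "c = 0"
    by blast
  then show ?thesis
  proof cases
    case 1
    then show ?thesis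
      using nonpos_rooted_add_if_im_cross_nonneg[OF nonpos_rooted_X_mult[OF corners(2)] _ corners(1)
          nonpos_rooted_X_mult[OF corners(4)] cross(2) im_cross_nonneg_X_mult[OF cross(7)]]
      by simp
  next
    case 2
    then show ?thesis
      using nonpos_rooted_add_if_im_cross_nonneg[OF nonpos_rooted_X_mult[OF corners(3)] _ corners(1)
          nonpos_rooted_X_mult[OF corners(4)] cross(6) im_cross_nonneg_X_mult[OF cross(3)]]
      by simp
  next
    case 3
    then show ?thesis
      using square[unfolded interpolatory_square_def, rule_format, of 1 1 1 1 True False]
      by (simp add: interp_pair_def add.commute)
  qed
qed

lemma interpolatory_square_contract:
  assumes square: "interpolatory_square a b c d" and "l > 0" "r > 0"
  shows "nonpos_rooted (interp_pair e l r (a + [:0, 1:] * d) (b + c))"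
proof -
  note cross = interpolatory_square_im_cross_nonneg[OF square]
    interpolatory_square_im_cross_nonneg[OF interpolatory_square_transpose[OF square]]
  note diagonals = interpolatory_square_diagonal[OF square] interpolatory_square_anti_diagonal[OF square]
  have "im_cross_nonneg (a + [:0, 1:] * d) (b + c)"
    by (intro im_cross_nonneg_add_left im_cross_nonneg_add_right cross)
  moreover have "im_cross_nonneg ([:0, 1:] * (b + c)) (a + [:0, 1:] * d)"
    unfolding distrib_left
    by (intro im_cross_nonneg_add_left im_cross_nonneg_add_right im_cross_nonneg_X_mult cross)
  ultimately show ?thesis
    using nonpos_rooted_pos_comb[OF diagonals _ \<open>r > 0\<close> \<open>l > 0\<close>]
      nonpos_rooted_pos_comb[OF nonpos_rooted_X_mult[OF diagonals(2)] diagonals(1) _ \<open>r > 0\<close> \<open>l > 0\<close>]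
    by (cases e) (simp_all add: interp_pair_def add.commute)
qed

lemma interpolatory_cube_square:
  assumes cube: "interpolatory_cube k P" and "k \<ge> 2"
    and ls: "length ls = k - 2" "\<forall>a\<in>set ls. a > 0" and rs: "length rs = k - 2" "\<forall>a\<in>set rs. a > 0"
    and S: "S \<subseteq> {0..<k - 2}"
  defines "corner b c \<equiv> interp ls rs (flipS S (face (face P b) c))"
  shows "interpolatory_square (corner False False) (corner False True) (corner True False) (corner True True)"
  unfolding interpolatory_square_def
proof (intro allI impI)
  fix e1 e2 :: bool and l1 r1 l2 r2 :: real
  assume pos: "l1 > 0" "r1 > 0" "l2 > 0" "r2 > 0"
  define S2 where "S2 = (if e2 then {0} else {}) \<union> Suc ` S"
  define S1 where "S1 = (if e1 then {0} else {}) \<union> Suc ` S2"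
  have "finite S"
    using S finite_subset by blast
  then have "finite S1" "finite S2"
    by (simp_all add: S1_def S2_def)
  have "S1 \<subseteq> {0..<k}"
    using S \<open>k \<ge> 2\<close> by (auto simp: S1_def S2_def)
  then have "nonpos_rooted (interp (l1 # l2 # ls) (r1 # r2 # rs) (flipS S1 P))"
    using cube pos ls rs \<open>k \<ge> 2\<close> unfolding interpolatory_cube_def nonpos_rooted_def
    by (auto simp del: interp.simps)
  moreover have "Suc -` S1 = S2" "Suc -` S2 = S" "0 \<in> S1 \<longleftrightarrow> e1" "0 \<in> S2 \<longleftrightarrow> e2"
    by (auto simp: S1_def S2_def)
  ultimately show "nonpos_rooted (interp_pair e1 l1 r1 (interp_pair e2 l2 r2 (corner False False)
      (corner False True)) (interp_pair e2 l2 r2 (corner True False) (corner True True)))"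
    by (simp only: interp_flipS_Cons \<open>finite S1\<close> \<open>finite S2\<close> corner_def face_def)
qed

lemma interp_flipS_contractQ:
  fixes P :: cube and ls rs :: "real list"
  assumes "finite S"
  defines "corner b c \<equiv> interp ls rs (flipS (Suc -` S) (face (face P b) c))"
  shows "interp (l # ls) (r # rs) (flipS S (contractQ P)) =
    interp_pair (0 \<in> S) l r (corner False False + [:0, 1:] * corner True True)
                            (corner False True + corner True False)"
proof -
  have fin: "finite (Suc -` S)"
    using \<open>finite S\<close> by (simp add: finite_vimageI)
  have "face (contractQ P) False = (\<lambda>\<alpha>. face (face P False) False \<alpha> + [:0, 1:] * face (face P True) True \<alpha>)"
    and "face (contractQ P) True = (\<lambda>\<alpha>. face (face P False) True \<alpha> + face (face P True) False \<alpha>)"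
    by (simp_all add: face_def fun_eq_iff)
  then show ?thesis
    unfolding interp_flipS_Cons[OF \<open>finite S\<close>] corner_def
    by (simp only: flipS_add[OF fin] flipS_mult[OF fin] interp_add interp_mult)
qed

theorem lemma4p9:
  fixes k :: nat and P :: cube
  assumes "k \<ge> 2"
    and "\<exists>\<beta>. length \<beta> = k - 2 \<and> (P (False # False # \<beta>) \<noteq> 0 \<or> P (True # True # \<beta>) \<noteq> 0)"
    and "\<exists>\<gamma>. length \<gamma> = k - 2 \<and> (P (False # True # \<gamma>) \<noteq> 0 \<or> P (True # False # \<gamma>) \<noteq> 0)"
    and "interpolatory_cube k P"
  shows "interpolatory_cube (k - 1) (contractQ P)"
  unfolding interpolatory_cube_def
proof (intro allI impI)
  fix lam rho :: "real list" and S :: "nat set"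
  assume A: "length lam = k - 1 \<and> length rho = k - 1 \<and> (\<forall>a\<in>set lam. 0 < a) \<and>
         (\<forall>a\<in>set rho. 0 < a) \<and> S \<subseteq> {0..<k - 1}"
  then have "lam \<noteq> []" "rho \<noteq> []"
    using \<open>k \<ge> 2\<close> by auto
  then obtain l ls r rs where lam: "lam = l # ls" and rho: "rho = r # rs"
    by (meson neq_Nil_conv)
  have "finite S" "Suc -` S \<subseteq> {0..<k - 2}"
    using A finite_subset by auto
  moreover have "l > 0" "r > 0" "length ls = k - 2" "length rs = k - 2"
    "\<forall>a\<in>set ls. a > 0" "\<forall>a\<in>set rs. a > 0"
    using A lam rho by auto
  ultimately have "nonpos_rooted (interp lam rho (flipS S (contractQ P)))"
    unfolding lam rho interp_flipS_contractQ[OF \<open>finite S\<close>]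
    by (intro interpolatory_square_contract interpolatory_cube_square[OF assms(4,1)])
  then show "standard (interp lam rho (flipS S (contractQ P))) \<and>
      nonpos_zeros (interp lam rho (flipS S (contractQ P)))"
    by (simp add: nonpos_rooted_def)
qed

end
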